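(* Assume [LJ1]–[LJ4] and let $\ell>0$. For every $\varepsilon>0$ there exists $\eta=\eta(\varepsilon)>0$ such that for all $z\in\mathbb R$ $$F(z):=\inf_{a:\,|a-\min\{\ell,\gamma\}|\ge\varepsilon}\tfrac12\big(J_1(a)+J_1(2z-a)\big)+J_2(z)-(J_0^{**})'(\ell)(z-\ell)-J_0^{**}(\ell)\ \ge\ \eta.$$
   Context: Potentials: $J_1,J_2:\mathbb R\to(-\infty,+\infty]$; $J_{CB}:=J_1+J_2$; $J_0(z):=J_2(z)+\frac12\inf\{J_1(z_1)+J_1(z_2):z_1+z_2=2z\}$; $J_0^{**}$ is the convex lower semicontinuous envelope of $J_0$ (under the hypotheses below it is differentiable, and $(J_0^{**})'(\ell)$ denotes its derivative at $\ell$). Hypotheses: [LJ1] $\{z:J_0(z)=J_0^{**}(z)\}\cap\{z:J_0\text{ is affine in a neighbourhood of }z\}=\emptyset$. [LJ2] for every $z$ with $J_0(z)=J_0^{**}(z)$, the set $\{(z_1,z_2):z_1+z_2=2z,\ J_0(z)=J_2(z)+\frac12(J_1(z_1)+J_1(z_2))\}$ has exactly one element. [LJ3] $J_1,J_2$ are $C^{1,\alpha}$ on their domains for some $0<\alpha\le1$, $J_0$ is $C^1$ on its domain, $\operatorname{dom}J_1=\operatorname{dom}J_2\supset(0,+\infty)$, $\lim_{z\to+\infty}J_j(z)=0$ ($j=1,2$) and $\lim_{z\to+\infty}J_0(z)=:J_0(+\infty)\in\mathbb R$. [LJ4] there is a convex $\Psi:\mathbb R\to[0,+\infty]$ with $\lim_{z\to-\infty}\Psi(z)/|z|=+\infty$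 and constants $c_1,c_2>0$ with $c_1(\Psi(z)-1)\le J_j(z)\le c_2\max\{\Psi(z),|z|\}$ for all $z\in\mathbb R$, $j=1,2$; there are $\delta_1,\delta_2,\gamma>0$ with $\{\delta_j\}=\operatorname{argmin}J_j$ and $\{\gamma\}=\operatorname{argmin}J_0$; $J_j$ is strictly convex on $(-\infty,\delta_j)\cap\operatorname{dom}J_j$; $J_0(\gamma)<J_0(+\infty)$; and $J_0(z)=J_0^{**}(z)$ for all $z\le\gamma$. *)

theory Defs
  imports "HOL-Analysis.Analysis" "HOL-Library.Extended_Real"
begin

text \<open>Potentials are extended-real valued, with values in (-inf, +inf].\<close>

definition edom :: "(real \<Rightarrow> ereal) \<Rightarrow> real set" where
  "edom f = {z. f z < \<infinity>}"

definition fconj :: "(real \<Rightarrow> ereal) \<Rightarrow> real \<Rightarrow> ereal" where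
  "fconj f p = (SUP x. ereal (p * x) - f x)"

definition biconj :: "(real \<Rightarrow> ereal) \<Rightarrow> real \<Rightarrow> ereal" where
  "biconj f z = (SUP p. ereal (p * z) - fconj f p)"

definition J0fun :: "(real \<Rightarrow> ereal) \<Rightarrow> (real \<Rightarrow> ereal) \<Rightarrow> real \<Rightarrow> ereal" where
  "J0fun J1 J2 z = J2 z + Inf {J1 z1 + J1 z2 | z1 z2. z1 + z2 = 2 * z} / 2"

definition econvex_on :: "real set \<Rightarrow> (real \<Rightarrow> ereal) \<Rightarrow> bool" where
  "econvex_on S f \<longleftrightarrow> (\<forall>x\<in>S. \<forall>y\<in>S. \<forall>t::real. 0 \<le> t \<and> t \<le> 1 \<longrightarrow>
      f ((1 - t) * x + t * y) \<le> ereal (1 - t) * f x + ereal t * f y)"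

definition estrict_convex_on :: "real set \<Rightarrow> (real \<Rightarrow> ereal) \<Rightarrow> bool" where
  "estrict_convex_on S f \<longleftrightarrow> (\<forall>x\<in>S. \<forall>y\<in>S. \<forall>t::real. x \<noteq> y \<and> 0 < t \<and> t < 1 \<longrightarrow>
      f ((1 - t) * x + t * y) < ereal (1 - t) * f x + ereal t * f y)"

definition C1alpha_on_dom :: "real \<Rightarrow> (real \<Rightarrow> ereal) \<Rightarrow> bool" where
  "C1alpha_on_dom \<alpha> f \<longleftrightarrow> (\<exists>f'. (\<forall>x\<in>edom f.
        ((\<lambda>y. real_of_ereal (f y)) has_real_derivative f' x) (at x within edom f)) \<and>
     (\<forall>K. compact K \<and> K \<subseteq> edom f \<longrightarrow>
        (\<exists>C. \<forall>x\<in>K. \<forall>y\<in>K. \<bar>f' x - f' y\<bar> \<le> C * \<bar>x - y\<bar> powr \<alpha>)))"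

definition C1_on_dom :: "(real \<Rightarrow> ereal) \<Rightarrow> bool" where
  "C1_on_dom f \<longleftrightarrow> (\<exists>f'. (\<forall>x\<in>edom f.
        ((\<lambda>y. real_of_ereal (f y)) has_real_derivative f' x) (at x within edom f)) \<and>
     continuous_on (edom f) f')"

definition locally_affine_at :: "(real \<Rightarrow> ereal) \<Rightarrow> real \<Rightarrow> bool" where
  "locally_affine_at f z \<longleftrightarrow> (\<exists>r>0. \<exists>a b. \<forall>x\<in>ball z r. f x = ereal (a * x + b))"

end

theory Submission
  imports Defs
begin

text \<open>
  Let T be the tangent to J0** at \<open>\<ell>\<close>.  On \<open>(-\<infinity>, \<gamma>]\<close> the envelope J0** equals J0, and on
  \<open>[\<gamma>, \<infinity>)\<close> it is constant: a convex function bounded above on a half-line cannot increase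
  there.  Hence J0** is differentiable at \<open>\<ell>\<close>, and
  \<open>T \<le> J0** \<le> J0 \<le> J2 z + (J1 a + J1 (2 z - a)) / 2\<close> for every splitting of \<open>2 z\<close>, so F is
  nonnegative.  Equality forces \<open>J0 z = J0** z = T z\<close> with the infimum defining J0 attained
  at \<open>(a, 2 z - a)\<close>: a second contact point would make J0 affine where it equals its envelope
  [LJ1], so \<open>z = min \<ell> \<gamma>\<close>, and uniqueness of the optimal pair [LJ2] applied to both of its
  orderings gives \<open>a = z\<close>.  The gap is uniform by compactness: pairs with a small gap stay in a
  bounded box (superlinear growth of \<Psi> on the left, \<open>J0 \<gamma> < J0 (+\<infinity>)\<close> on the right), J1 and
  J2 are continuous on their domains, and limits of such pairs stay in the domains because J0**
  is lower semicontinuous.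
\<close>

section \<open>The Legendre--Fenchel biconjugate\<close>

lemma fconj_ge: "ereal (p * x) - f x \<le> fconj f p"
  unfolding fconj_def by (rule SUP_upper) simp

lemma fconj_neq_minf: "f x0 \<noteq> \<infinity> \<Longrightarrow> fconj f p \<noteq> -\<infinity>"
  using fconj_ge[of p x0 f] by (cases "f x0") auto

lemma biconj_le: "biconj f z \<le> f z"
  unfolding biconj_def
proof (rule SUP_least)
  fix p :: real
  show "ereal (p * z) - fconj f p \<le> f z"
    using fconj_ge[of p z f] by (cases "f z"; cases "fconj f p") auto
qed

lemma biconj_ge_const:
  assumes "\<And>x. ereal m \<le> f x"
  shows "ereal m \<le> biconj f z"
proof -
  have conj: "fconj f 0 \<le> ereal (-m)"
    unfolding fconj_def
  proof (rule SUP_least)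
    fix x show "ereal (0 * x) - f x \<le> ereal (- m)"
      using assms[of x] by (cases "f x") auto
  qed
  have biconj: "ereal (0 * z) - fconj f 0 \<le> biconj f z"
    unfolding biconj_def by (rule SUP_upper) simp
  show ?thesis
  proof (cases "fconj f 0")
    case (real r)
    then have "ereal m \<le> ereal (0 * z) - fconj f 0"
      using conj by simp
    then show ?thesis
      using biconj by (rule order.trans)
  qed (use conj biconj in auto)
qed

lemma biconj_convex_combination:
  assumes "f x0 \<noteq> \<infinity>" "biconj f x = ereal u" "biconj f y = ereal v" "0 \<le> t" "t \<le> 1"
  shows "biconj f ((1 - t) * x + t * y) \<le> ereal ((1 - t) * u + t * v)"
  unfolding biconj_def
proof (rule SUP_least)
  fix p :: real
  have x: "ereal (p * x) - fconj f p \<le> ereal u" and y: "ereal (p * y) - fconj f p \<le> ereal v"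
    using assms(2,3) unfolding biconj_def by (metis SUP_upper UNIV_I)+
  have "fconj f p \<noteq> -\<infinity>"
    using fconj_neq_minf[of f x0] assms(1) by blast
  then show "ereal (p * ((1 - t) * x + t * y)) - fconj f p \<le> ereal ((1 - t) * u + t * v)"
  proof (cases "fconj f p")
    case (real c)
    then have "(1 - t) * (p * x - c) + t * (p * y - c) \<le> (1 - t) * u + t * v"
      using x y assms(4,5) by (intro add_mono mult_left_mono) auto
    then show ?thesis
      using real by (simp add: algebra_simps)
  qed (use x in auto)
qed

lemma convex_on_biconj:
  assumes "f x0 \<noteq> \<infinity>" "\<And>x. biconj f x \<noteq> -\<infinity>"
  shows "convex_on {x. biconj f x \<noteq> \<infinity>} (\<lambda>x. real_of_ereal (biconj f x))"
proof -
  let ?A = "{x. biconj f x \<noteq> \<infinity>}" and ?h = "\<lambda>x. real_of_ereal (biconj f x)"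
  have fin: "biconj f x = ereal (?h x)" if "x \<in> ?A" for x
    using that assms(2)[of x] by (cases "biconj f x") auto
  have le: "biconj f ((1 - t) * x + t * y) \<le> ereal ((1 - t) * ?h x + t * ?h y)"
    if "x \<in> ?A" "y \<in> ?A" "0 \<le> t" "t \<le> 1" for x y t
    using biconj_convex_combination[OF assms(1) fin fin] that by blast
  have "convex ?A"
  proof (rule convexI)
    fix x y r s :: real
    assume "x \<in> ?A" "y \<in> ?A" "0 \<le> r" "0 \<le> s" "r + s = 1"
    then show "r *\<^sub>R x + s *\<^sub>R y \<in> ?A"
      using le[of x y s] by (auto simp: eq_diff_eq[symmetric])
  qed
  then show ?thesis
  proof (rule convex_onI[rotated])
    fix t x y :: real
    assume "0 < t" "t < 1" "x \<in> ?A" "y \<in> ?A"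
    then have le_xy: "biconj f ((1 - t) * x + t * y) \<le> ereal ((1 - t) * ?h x + t * ?h y)"
      using le by simp
    moreover obtain r where "biconj f ((1 - t) * x + t * y) = ereal r"
      using le_xy assms(2) by (cases "biconj f ((1 - t) * x + t * y)") auto
    ultimately show "?h ((1 - t) *\<^sub>R x + t *\<^sub>R y) \<le> (1 - t) * ?h x + t * ?h y"
      by simp
  qed
qed

lemma biconj_le_limit:
  assumes "x \<longlonglongrightarrow> b" "\<And>n. f (x n) \<le> ereal M"
  shows "biconj f b \<le> ereal M"
  unfolding biconj_def
proof (rule SUP_least)
  fix p :: real
  have "fconj f p \<noteq> -\<infinity>"
    using assms(2)[of 0] by (intro fconj_neq_minf[of f "x 0"]) auto
  then show "ereal (p * b) - fconj f p \<le> ereal M"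
  proof (cases "fconj f p")
    case (real c)
    have "p * b - c \<le> p * (b - x n) + M" for n
    proof -
      have "ereal (p * x n) - f (x n) \<le> ereal c"
        using fconj_ge[of p "x n" f] real by simp
      then have "p * x n - M \<le> c"
        using assms(2)[of n] by (cases "f (x n)") auto
      then show ?thesis by (simp add: algebra_simps)
    qed
    moreover have "(\<lambda>n. p * (b - x n) + M) \<longlonglongrightarrow> p * (b - b) + M"
      by (intro tendsto_intros assms(1))
    ultimately have "p * b - c \<le> p * (b - b) + M"
      by (intro LIMSEQ_le_const) auto
    then show ?thesis
      using real by simp
  qed auto
qed

lemma convex_on_bounded_above_le_left:
  fixes f :: "real \<Rightarrow> real"
  assumes "convex_on {a..} f" "eventually (\<lambda>w. f w \<le> M) at_top" "a \<le> x"
  shows "f x \<le> f a"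
proof -
  have "eventually (\<lambda>w. f x \<le> f a + (x - a) / (w - a) * (M - f a)) at_top"
    using assms(2) eventually_gt_at_top[of x]
  proof eventually_elim
    case (elim w)
    define t where "t = (x - a) / (w - a)"
    have t: "0 \<le> t" "t \<le> 1" and tw: "t * (w - a) = x - a"
      using elim assms(3) by (auto simp: t_def)
    have "(1 - t) * a + t * w = a + t * (w - a)"
      by (simp add: algebra_simps)
    then have x: "x = (1 - t) * a + t * w"
      using tw by simp
    have "f x \<le> (1 - t) * f a + t * f w"
      using convex_onD[OF assms(1) t] elim assms(3) by (simp add: x)
    also have "\<dots> \<le> (1 - t) * f a + t * M"
      using elim t by (simp add: mult_left_mono)
    also have "\<dots> = f a + t * (M - f a)"
      by (simp add: algebra_simps)
    finally show ?case
      by (simp add: t_def)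
  qed
  moreover have "filterlim (\<lambda>w. w - a) at_top at_top"
    using filterlim_tendsto_add_at_top[OF tendsto_const[of "-a"] filterlim_ident] by simp
  then have "((\<lambda>w. f a + (x - a) / (w - a) * (M - f a)) \<longlongrightarrow> f a + 0 * (M - f a)) at_top"
    by (intro tendsto_intros tendsto_divide_0[OF tendsto_const] filterlim_at_top_imp_at_infinity)
  ultimately show ?thesis
    by (intro tendsto_le[OF trivial_limit_at_top_linorder _ tendsto_const]) auto
qed

lemma has_real_derivative_split_at:
  assumes "(f has_real_derivative D) (at x within {..x})"
      and "(f has_real_derivative D) (at x within {x..})"
  shows "(f has_real_derivative D) (at x)"
proof -
  have "((\<lambda>y. (f y - f x) / (y - x)) \<longlongrightarrow> D) (at x within {..x} \<union> {x..})"
    using assms unfolding has_field_derivative_iff by (simp add: Lim_within_Un)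
  moreover have "{..x} \<union> {x..} = (UNIV :: real set)"
    by auto
  ultimately show ?thesis
    unfolding has_field_derivative_iff by simp
qed

lemma C1alpha_on_dom_LIMSEQ:
  assumes "C1alpha_on_dom \<alpha> f" "b \<in> edom f" "\<And>n. x n \<in> edom f" "x \<longlonglongrightarrow> b"
  shows "(\<lambda>n. real_of_ereal (f (x n))) \<longlonglongrightarrow> real_of_ereal (f b)"
proof -
  obtain f' where "\<And>x. x \<in> edom f \<Longrightarrow>
      ((\<lambda>y. real_of_ereal (f y)) has_real_derivative f' x) (at x within edom f)"
    using assms(1) unfolding C1alpha_on_dom_def by blast
  then have "((\<lambda>y. real_of_ereal (f y)) has_real_derivative f' b) (at b within edom f)"
    using assms(2) by blast
  then have "continuous (at b within edom f) (\<lambda>y. real_of_ereal (f y))"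
    by (rule DERIV_continuous)
  then show ?thesis
    using assms(3,4) unfolding continuous_within_sequentially comp_def by blast
qed

lemma C1_on_dom_has_derivative_interior:
  assumes "C1_on_dom f" "x \<in> interior (edom f)"
  shows "\<exists>d. ((\<lambda>y. real_of_ereal (f y)) has_real_derivative d) (at x)"
proof -
  obtain f' where "\<And>x. x \<in> edom f \<Longrightarrow>
      ((\<lambda>y. real_of_ereal (f y)) has_real_derivative f' x) (at x within edom f)"
    using assms(1) unfolding C1_on_dom_def by blast
  then have "((\<lambda>y. real_of_ereal (f y)) has_real_derivative f' x) (at x)"
    using assms(2) interior_subset at_within_interior[OF assms(2)] by fastforce
  then show ?thesis ..
qed

section \<open>The potentials and their convex envelope\<close>

locale lj_potentials =
  fixes J1 J2 \<Psi> :: "real \<Rightarrow> ereal" and \<alpha> c1 c2 \<gamma> J0inf :: real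
  assumes J1_ninf: "\<And>z. J1 z \<noteq> -\<infinity>"
      and J2_ninf: "\<And>z. J2 z \<noteq> -\<infinity>"
      and LJ1: "{z. J0fun J1 J2 z = biconj (J0fun J1 J2) z}
                  \<inter> {z. locally_affine_at (J0fun J1 J2) z} = {}"
      and LJ2: "\<And>z. z \<in> edom (J0fun J1 J2) \<Longrightarrow> J0fun J1 J2 z = biconj (J0fun J1 J2) z \<Longrightarrow>
                  (\<exists>!p. fst p + snd p = 2 * z \<and>
                        J0fun J1 J2 z = J2 z + (J1 (fst p) + J1 (snd p)) / 2)"
      and J1_C1a: "C1alpha_on_dom \<alpha> J1"
      and J2_C1a: "C1alpha_on_dom \<alpha> J2"
      and J0_C1: "C1_on_dom (J0fun J1 J2)"
      and dom_eq: "edom J1 = edom J2"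
      and dom_pos: "{0<..} \<subseteq> edom J1"
      and J0_lim: "(J0fun J1 J2 \<longlongrightarrow> ereal J0inf) at_top"
      and Psi_nonneg: "\<And>z. \<Psi> z \<ge> 0"
      and Psi_superlin: "((\<lambda>z. \<Psi> z / ereal \<bar>z\<bar>) \<longlongrightarrow> \<infinity>) at_bot"
      and c_pos: "c1 > 0" "c2 > 0"
      and J1_bounds: "\<And>z. ereal c1 * (\<Psi> z - 1) \<le> J1 z"
                     "\<And>z. J1 z \<le> ereal c2 * max (\<Psi> z) (ereal \<bar>z\<bar>)"
      and J2_bounds: "\<And>z. ereal c1 * (\<Psi> z - 1) \<le> J2 z"
                     "\<And>z. J2 z \<le> ereal c2 * max (\<Psi> z) (ereal \<bar>z\<bar>)"
      and gamma_pos: "\<gamma> > 0"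
      and argmin_J0: "{x. \<forall>z. J0fun J1 J2 x \<le> J0fun J1 J2 z} = {\<gamma>}"
      and J0_gamma: "J0fun J1 J2 \<gamma> < ereal J0inf"
      and J0_convex_left: "\<And>z. z \<le> \<gamma> \<Longrightarrow> J0fun J1 J2 z = biconj (J0fun J1 J2) z"
begin

abbreviation "J0 \<equiv> J0fun J1 J2"
abbreviation "G \<equiv> biconj J0"

text \<open>Real parts; since \<open>real_of_ereal \<infinity> = 0\<close> they carry information only on the domains.\<close>

definition "j1 x = real_of_ereal (J1 x)"
definition "j2 x = real_of_ereal (J2 x)"
definition "j x = real_of_ereal (J0 x)"
definition "g x = real_of_ereal (G x)"

lemma neg_c1_le_of_Psi_bound:
  assumes "ereal c1 * (\<Psi> z - 1) \<le> J"
  shows "ereal (-c1) \<le> J"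
proof -
  have "ereal (-c1) \<le> ereal c1 * (\<Psi> z - 1)"
    using Psi_nonneg[of z] c_pos
    by (cases "\<Psi> z") (auto simp: one_ereal_def algebra_simps intro!: mult_nonneg_nonneg)
  then show ?thesis
    using assms by (rule order.trans)
qed

lemma J1_ge: "ereal (-c1) \<le> J1 z"
  by (rule neg_c1_le_of_Psi_bound[OF J1_bounds(1)])

lemma J2_ge: "ereal (-c1) \<le> J2 z"
  by (rule neg_c1_le_of_Psi_bound[OF J2_bounds(1)])

lemma j1_ge: "-c1 \<le> j1 z"
  using J1_ge[of z] c_pos unfolding j1_def by (cases "J1 z") auto

lemma j2_ge: "-c1 \<le> j2 z"
  using J2_ge[of z] c_pos unfolding j2_def by (cases "J2 z") auto

lemma J1_eq_j1: "J1 z \<noteq> \<infinity> \<Longrightarrow> J1 z = ereal (j1 z)"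
  using J1_ninf[of z] unfolding j1_def by (cases "J1 z") auto

lemma J2_eq_j2: "J2 z \<noteq> \<infinity> \<Longrightarrow> J2 z = ereal (j2 z)"
  using J2_ninf[of z] unfolding j2_def by (cases "J2 z") auto

lemma J0_le_split: "J0 z \<le> J2 z + (J1 a + J1 (2 * z - a)) / 2"
proof -
  have "Inf {J1 z1 + J1 z2 | z1 z2. z1 + z2 = 2 * z} \<le> J1 a + J1 (2 * z - a)"
    by (rule Inf_lower, intro CollectI exI[of _ a] exI[of _ "2 * z - a"]) simp
  then show ?thesis
    unfolding J0fun_def by (intro add_left_mono ereal_divide_right_mono) auto
qed

lemma J0_ge_J2: "J2 z + ereal (-c1) \<le> J0 z"
proof -
  have "ereal (-2 * c1) \<le> Inf {J1 z1 + J1 z2 | z1 z2. z1 + z2 = 2 * z}"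
  proof (rule Inf_greatest, clarify)
    fix z1 z2 :: real
    show "ereal (-2 * c1) \<le> J1 z1 + J1 z2"
      using add_mono[OF J1_ge[of z1] J1_ge[of z2]] by simp
  qed
  then have "ereal (-c1) \<le> Inf {J1 z1 + J1 z2 | z1 z2. z1 + z2 = 2 * z} / 2"
    by (cases "Inf {J1 z1 + J1 z2 | z1 z2. z1 + z2 = 2 * z}") auto
  then show ?thesis
    unfolding J0fun_def by (rule add_left_mono)
qed

lemma J_finite_pos: "0 < z \<Longrightarrow> J1 z \<noteq> \<infinity>" "0 < z \<Longrightarrow> J2 z \<noteq> \<infinity>"
  using dom_pos dom_eq unfolding edom_def by auto

lemma J0_eq_j_pos:
  assumes "0 < z"
  shows "J0 z = ereal (j z)"
proof -
  have "J0 z \<noteq> \<infinity>"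
    using J0_le_split[of z z] J_finite_pos[OF assms] J1_ninf[of z] J2_ninf[of z]
    by (cases "J1 z"; cases "J2 z") auto
  moreover have "J0 z \<noteq> -\<infinity>"
    using J0_ge_J2[of z] J2_ninf[of z] by auto
  ultimately show ?thesis
    unfolding j_def by (cases "J0 z") auto
qed

lemma J0_ge_J0_gamma: "J0 \<gamma> \<le> J0 z"
  using argmin_J0 by auto

lemma Psi_max_le:
  assumes "ereal c1 * (\<Psi> x - 1) \<le> ereal M" "\<bar>x\<bar> \<le> B"
  shows "ereal c2 * max (\<Psi> x) (ereal \<bar>x\<bar>) \<le> ereal (c2 * max (M / c1 + 1) B)"
proof -
  have "\<Psi> x \<le> ereal (M / c1 + 1)"
  proof (cases "\<Psi> x")
    case (real r)
    then have "c1 * (r - 1) \<le> M"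
      using assms(1) by (simp add: one_ereal_def)
    then have "r - 1 \<le> M / c1"
      using c_pos(1) by (simp add: pos_le_divide_eq mult.commute)
    then show ?thesis
      using real by simp
  qed (use assms(1) c_pos Psi_nonneg[of x] in auto)
  then have "max (\<Psi> x) (ereal \<bar>x\<bar>) \<le> ereal (max (M / c1 + 1) B)"
    unfolding ereal_max using assms(2) by (intro max.mono) auto
  then have "ereal c2 * max (\<Psi> x) (ereal \<bar>x\<bar>) \<le> ereal c2 * ereal (max (M / c1 + 1) B)"
    using c_pos by (intro ereal_mult_left_mono) auto
  then show ?thesis
    by (simp only: times_ereal.simps(1))
qed

lemma J1_le_of_J2_le:
  assumes "J2 x \<le> ereal M" "\<bar>x\<bar> \<le> B"
  shows "J1 x \<le> ereal (c2 * max (M / c1 + 1) B)"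
  using J1_bounds(2) Psi_max_le[OF order.trans[OF J2_bounds(1) assms(1)] assms(2)]
  by (rule order.trans)

lemma J2_le_of_J1_le:
  assumes "J1 x \<le> ereal M" "\<bar>x\<bar> \<le> B"
  shows "J2 x \<le> ereal (c2 * max (M / c1 + 1) B)"
  using J2_bounds(2) Psi_max_le[OF order.trans[OF J1_bounds(1) assms(1)] assms(2)]
  by (rule order.trans)

lemma j1_superlinear: "\<exists>W. \<forall>w\<le>W. J1 w \<noteq> \<infinity> \<longrightarrow> K * \<bar>w\<bar> - c1 \<le> j1 w"
proof -
  have "eventually (\<lambda>w. ereal (K / c1) < \<Psi> w / ereal \<bar>w\<bar>) at_bot"
    by (rule order_tendstoD(1)[OF Psi_superlin]) simp
  then obtain W where W: "\<And>w. w \<le> W \<Longrightarrow> ereal (K / c1) < \<Psi> w / ereal \<bar>w\<bar>"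
    by (auto simp: eventually_at_bot_linorder)
  have "K * \<bar>w\<bar> - c1 \<le> j1 w" if "w \<le> min W (-1)" "J1 w \<noteq> \<infinity>" for w
  proof -
    have Psi_le: "ereal c1 * (\<Psi> w - 1) \<le> ereal (j1 w)"
      using J1_bounds(1)[of w] J1_eq_j1[OF that(2)] by simp
    then obtain s where s: "\<Psi> w = ereal s"
      using c_pos Psi_nonneg[of w] by (cases "\<Psi> w") auto
    have w: "0 < \<bar>w\<bar>"
      using that by auto
    then have "K / c1 < s / \<bar>w\<bar>"
      using W[of w] that s by simp
    then have "K * \<bar>w\<bar> < c1 * s"
      using c_pos w by (simp add: field_simps)
    moreover have "c1 * (s - 1) \<le> j1 w"
      using Psi_le s by (simp add: one_ereal_def)
    ultimately show ?thesis
      by (simp add: algebra_simps)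
  qed
  then show ?thesis
    by blast
qed

lemma G_ge_J0_gamma: "ereal (j \<gamma>) \<le> G z"
  using J0_ge_J0_gamma J0_eq_j_pos[OF gamma_pos] by (intro biconj_ge_const) simp

lemma G_finite_pos: "0 < z \<Longrightarrow> G z \<noteq> \<infinity>"
  using biconj_le[of J0 z] J0_eq_j_pos[of z] by auto

lemma G_eq_g: "G z \<noteq> \<infinity> \<Longrightarrow> G z = ereal (g z)"
  using G_ge_J0_gamma[of z] unfolding g_def by (cases "G z") auto

lemma g_convex: "convex_on {x. G x \<noteq> \<infinity>} g"
proof -
  have "G x \<noteq> -\<infinity>" for x
    using G_ge_J0_gamma[of x] by auto
  then show ?thesis
    unfolding g_def[abs_def]
    by (intro convex_on_biconj[of J0 \<gamma>]) (auto simp: J0_eq_j_pos[OF gamma_pos])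
qed

lemma g_eq_j_left: "x \<le> \<gamma> \<Longrightarrow> g x = j x"
  unfolding g_def j_def using J0_convex_left by simp

lemma g_const_right:
  assumes "\<gamma> \<le> z"
  shows "g z = j \<gamma>"
proof (rule antisym)
  have "convex_on {\<gamma>..} g"
    by (rule convex_on_subset[OF g_convex]) (use G_finite_pos gamma_pos in auto)
  moreover have "eventually (\<lambda>w. J0 w < ereal (J0inf + 1)) at_top"
    by (rule order_tendstoD(2)[OF J0_lim]) simp
  then have "eventually (\<lambda>w. g w \<le> J0inf + 1) at_top"
    using eventually_gt_at_top[of 0]
  proof eventually_elim
    case (elim w)
    have "ereal (g w) \<le> J0 w"
      using biconj_le[of J0 w] G_eq_g[OF G_finite_pos[OF elim(2)]] by simp
    then have "ereal (g w) < ereal (J0inf + 1)"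
      using elim(1) by (rule le_less_trans)
    then show ?case
      by simp
  qed
  ultimately have "g z \<le> g \<gamma>"
    using assms by (rule convex_on_bounded_above_le_left)
  then show "g z \<le> j \<gamma>"
    using g_eq_j_left[of \<gamma>] by simp
  show "j \<gamma> \<le> g z"
    using G_ge_J0_gamma[of z] G_eq_g[OF G_finite_pos] assms gamma_pos by simp
qed

lemma j_has_derivative: "0 < x \<Longrightarrow> \<exists>d. (j has_real_derivative d) (at x)"
proof -
  assume "0 < x"
  have "{0<..} \<subseteq> edom J0"
    using J0_eq_j_pos unfolding edom_def by auto
  then have "x \<in> interior (edom J0)"
    using \<open>0 < x\<close> interior_maximal[of "{0<..}" "edom J0"] by auto
  then show ?thesis
    unfolding j_def[abs_def] by (rule C1_on_dom_has_derivative_interior[OF J0_C1])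
qed

lemma g_has_derivative_gamma: "(g has_real_derivative 0) (at \<gamma>)"
proof -
  obtain d where d: "(j has_real_derivative d) (at \<gamma>)"
    using j_has_derivative[OF gamma_pos] by blast
  have "d = 0"
  proof (rule DERIV_local_min[OF d gamma_pos], intro allI impI)
    fix y assume "\<bar>\<gamma> - y\<bar> < \<gamma>"
    then show "j \<gamma> \<le> j y"
      using J0_ge_J0_gamma[of y] J0_eq_j_pos[of y] J0_eq_j_pos[OF gamma_pos] by simp
  qed
  have "(g has_real_derivative d) (at \<gamma> within {..\<gamma>})"
  proof (rule has_field_derivative_transform_within[where d = 1])
    show "(j has_real_derivative d) (at \<gamma> within {..\<gamma>})"
      using d by (rule has_field_derivative_at_within)
    show "j y = g y" if "y \<in> {..\<gamma>}" for y
      using g_eq_j_left[of y] that by simp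
  qed auto
  moreover have "(g has_real_derivative 0) (at \<gamma> within {\<gamma>..})"
  proof (rule has_field_derivative_transform_within[where d = 1])
    show "((\<lambda>_. j \<gamma>) has_real_derivative 0) (at \<gamma> within {\<gamma>..})"
      by simp
    show "j \<gamma> = g y" if "y \<in> {\<gamma>..}" for y
      using g_const_right[of y] that by simp
  qed auto
  ultimately show ?thesis
    using \<open>d = 0\<close> by (metis has_real_derivative_split_at)
qed

lemma g_has_derivative:
  assumes "0 < ell"
  shows "\<exists>D. (g has_real_derivative D) (at ell) \<and> (\<gamma> \<le> ell \<longrightarrow> D = 0)"
proof (cases ell \<gamma> rule: linorder_cases)
  case less
  obtain d where "(j has_real_derivative d) (at ell)"
    using j_has_derivative[OF assms] by blast
  then have "(g has_real_derivative d) (at ell)"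
  proof (rule has_field_derivative_transform_within_open[of _ _ _ "{..<\<gamma>}"])
    show "j y = g y" if "y \<in> {..<\<gamma>}" for y
      using g_eq_j_left[of y] that by simp
  qed (use less in auto)
  then show ?thesis
    using less by auto
next
  case equal
  then show ?thesis
    using g_has_derivative_gamma by blast
next
  case greater
  have "(g has_real_derivative 0) (at ell)"
  proof (rule has_field_derivative_transform_within_open[OF DERIV_const, of "{\<gamma><..}"])
    show "j \<gamma> = g y" if "y \<in> {\<gamma><..}" for y
      using g_const_right[of y] that by simp
  qed (use greater in auto)
  then show ?thesis
    by blast
qed

text \<open>J1 need not be lower semicontinuous: a limit outside the domain lies left of \<open>\<gamma>\<close>, where
  \<open>J0 = J0** = \<infinity>\<close>, contradicting lower semicontinuity of J0**.\<close>

lemma limit_in_edom: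
  assumes "x \<longlonglongrightarrow> b" "\<And>n. J1 (x n) \<le> ereal M \<or> J2 (x n) \<le> ereal M"
  shows "b \<in> edom J1"
proof (rule ccontr)
  assume "b \<notin> edom J1"
  then have "J2 b = \<infinity>" "b \<le> \<gamma>"
    using dom_eq J_finite_pos(1)[of b] gamma_pos unfolding edom_def by force+
  then have "G b = \<infinity>"
    using J0_ge_J2[of b] J0_convex_left[of b] by simp
  obtain B where B: "\<And>n. \<bar>x n\<bar> \<le> B"
    using convergent_imp_Bseq[OF convergentI[OF assms(1)]] by (auto simp: Bseq_def)
  define M' where "M' = max M (c2 * max (M / c1 + 1) B)"
  have "G b \<le> ereal (2 * M')"
  proof (rule biconj_le_limit[OF assms(1)])
    fix n
    have "ereal M \<le> ereal M'" "ereal (c2 * max (M / c1 + 1) B) \<le> ereal M'"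
      by (simp_all add: M'_def)
    then have bounds: "J1 (x n) \<le> ereal M'" "J2 (x n) \<le> ereal M'"
      using assms(2)[of n] J1_le_of_J2_le[OF _ B] J2_le_of_J1_le[OF _ B] by (meson order_trans)+
    have "J0 (x n) \<le> J2 (x n) + (J1 (x n) + J1 (x n)) / 2"
      using J0_le_split[of "x n" "x n"] by simp
    also have "\<dots> \<le> ereal M' + (ereal M' + ereal M') / 2"
      by (intro add_mono bounds ereal_divide_right_mono) simp_all
    finally show "J0 (x n) \<le> ereal (2 * M')"
      by simp
  qed
  with \<open>G b = \<infinity>\<close> show False
    by simp
qed

end

section \<open>The tangent to the envelope at \<open>\<ell>\<close>\<close>

locale lj_tangent = lj_potentials +
  fixes ell D :: real
  assumes ell_pos: "0 < ell"
      and g_deriv: "(g has_real_derivative D) (at ell)"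
      and D_right: "\<gamma> \<le> ell \<Longrightarrow> D = 0"
begin

definition "T z = g ell + D * (z - ell)"

lemma G_ell: "G ell = ereal (g ell)"
  by (rule G_eq_g[OF G_finite_pos[OF ell_pos]])

lemma tangent_le_G: "ereal (T z) \<le> G z"
proof (cases "G z = \<infinity>")
  case False
  let ?A = "{x. G x \<noteq> \<infinity>}"
  have "{0<..} \<subseteq> interior ?A"
    using G_finite_pos by (intro interior_maximal) auto
  then have "D * (z - ell) \<le> g z - g ell"
    using False ell_pos g_convex
    by (intro convex_on_imp_above_tangent[of ?A] convex_connected convex_on_imp_convex
        has_field_derivative_at_within[OF g_deriv]) auto
  then show ?thesis
    using G_eq_g[OF False] unfolding T_def by simp
qed simp

lemma T_right: "\<gamma> \<le> ell \<Longrightarrow> T z = j \<gamma>"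
  unfolding T_def using D_right g_const_right by simp

lemma D_neg_left:
  assumes "ell < \<gamma>"
  shows "D < 0"
proof -
  have "J0 ell \<noteq> J0 \<gamma>"
  proof
    assume "J0 ell = J0 \<gamma>"
    then have "ell \<in> {x. \<forall>z. J0 x \<le> J0 z}"
      using J0_ge_J0_gamma by simp
    then show False
      using argmin_J0 assms by simp
  qed
  then have "j \<gamma> < g ell"
    using J0_ge_J0_gamma[of ell] J0_eq_j_pos[OF ell_pos] J0_eq_j_pos[OF gamma_pos]
      g_eq_j_left[of ell] assms by simp
  moreover have "T \<gamma> \<le> j \<gamma>"
    using tangent_le_G[of \<gamma>] G_eq_g[OF G_finite_pos[OF gamma_pos]] g_eq_j_left[of \<gamma>] by simp
  ultimately have "D * (\<gamma> - ell) < 0"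
    unfolding T_def by simp
  then show ?thesis
    using assms by (simp add: mult_less_0_iff)
qed

lemma D_nonpos: "D \<le> 0"
  using D_neg_left D_right by force

lemma J0_above_tangent_eventually: "\<exists>\<kappa>>0. \<exists>Z. \<forall>z\<ge>Z. ereal (T z + \<kappa>) \<le> J0 z"
proof (cases "\<gamma> \<le> ell")
  case True
  define \<kappa> where "\<kappa> = (J0inf - j \<gamma>) / 2"
  have "j \<gamma> < J0inf"
    using J0_gamma J0_eq_j_pos[OF gamma_pos] by simp
  then have "0 < \<kappa>" and "j \<gamma> + \<kappa> < J0inf"
    unfolding \<kappa>_def by (auto simp: field_simps)
  moreover have "eventually (\<lambda>z. ereal (j \<gamma> + \<kappa>) < J0 z) at_top"
    by (rule order_tendstoD(1)[OF J0_lim]) (use \<open>j \<gamma> + \<kappa> < J0inf\<close> in simp)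
  then obtain Z where "\<And>z. Z \<le> z \<Longrightarrow> ereal (j \<gamma> + \<kappa>) < J0 z"
    by (auto simp: eventually_at_top_linorder)
  ultimately show ?thesis
    using T_right[OF True] by (auto intro: less_imp_le)
next
  case False
  then have "D < 0"
    by (intro D_neg_left) simp
  have "ereal (T z + 1) \<le> J0 z" if "ell + (j \<gamma> - g ell - 1) / D \<le> z" for z
  proof -
    have "D * z \<le> D * (ell + (j \<gamma> - g ell - 1) / D)"
      using that \<open>D < 0\<close> by (intro mult_left_mono_neg) auto
    moreover have "D * (ell + (j \<gamma> - g ell - 1) / D) = D * ell + j \<gamma> - g ell - 1"
      using \<open>D < 0\<close> by (simp add: field_simps)
    ultimately have "T z + 1 \<le> j \<gamma>"
      unfolding T_def right_diff_distrib by linarith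
    then show ?thesis
      using J0_ge_J0_gamma[of z] J0_eq_j_pos[OF gamma_pos] by (metis ereal_less_eq(3) order.trans)
  qed
  then show ?thesis
    by (intro exI[of _ 1]) auto
qed

lemma G_eq_tangent_between:
  assumes "G p = ereal (T p)" "G q = ereal (T q)" "p \<le> x" "x \<le> q"
  shows "G x = ereal (T x)"
proof (cases "p = q")
  case False
  define t where "t = (x - p) / (q - p)"
  have t: "0 \<le> t" "t \<le> 1" and tq: "t * (q - p) = x - p"
    using assms(3,4) False by (auto simp: t_def)
  have "(1 - t) * p + t * q = p + t * (q - p)"
    by (simp add: algebra_simps)
  then have x: "(1 - t) * p + t * q = x"
    using tq by simp
  have "G ((1 - t) * p + t * q) \<le> ereal ((1 - t) * T p + t * T q)"
    by (rule biconj_convex_combination[of J0 \<gamma>, OF _ assms(1,2) t])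
       (simp add: J0_eq_j_pos[OF gamma_pos])
  then have "G x \<le> ereal ((1 - t) * T p + t * T q)"
    by (simp only: x)
  also have "(1 - t) * T p + t * T q = T x"
    unfolding T_def x[symmetric] by (simp add: algebra_simps)
  finally show ?thesis
    using tangent_le_G[of x] by simp
qed (use assms in simp)

lemma tangent_contact_left:
  assumes "ell < \<gamma>" "G z = ereal (T z)"
  shows "z = ell"
proof (rule ccontr)
  assume "z \<noteq> ell"
  define p q where "p = min z ell" and "q = max z ell"
  define v where "v = min q \<gamma>"
  have "p < v"
    using \<open>z \<noteq> ell\<close> assms(1) unfolding p_def q_def v_def by auto
  have Gp: "G p = ereal (T p)" and Gq: "G q = ereal (T q)"
    using assms(2) G_ell unfolding p_def q_def T_def by (auto simp: min_def max_def)
  define w r where "w = (p + v) / 2" and "r = (v - p) / 2"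
  have "J0 x = ereal (D * x + (g ell - D * ell))" if "x \<in> ball w r" for x
  proof -
    from that have "\<bar>w - x\<bar> < r"
      by (simp only: mem_ball dist_real_def)
    then have "p < x" "x < v"
      unfolding w_def r_def abs_less_iff by (auto simp: field_simps)
    then have "G x = ereal (T x)" and "J0 x = G x"
      using G_eq_tangent_between[OF Gp Gq] J0_convex_left[of x] by (auto simp: v_def)
    then show ?thesis
      unfolding T_def by (simp add: algebra_simps)
  qed
  moreover have "0 < r"
    using \<open>p < v\<close> by (simp add: r_def)
  ultimately have "locally_affine_at J0 w"
    unfolding locally_affine_at_def by blast
  moreover have "v \<le> \<gamma>"
    by (simp add: v_def)
  then have "w \<le> \<gamma>"
    using \<open>p < v\<close> by (simp add: w_def field_simps)
  then have "J0 w = G w"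
    by (rule J0_convex_left)
  ultimately show False
    using LJ1 by blast
qed

lemma J0_eq_tangent_imp:
  assumes "J0 z = ereal (T z)"
  shows "z = min ell \<gamma>"
proof (cases "\<gamma> \<le> ell")
  case True
  then have "z \<in> {x. \<forall>y. J0 x \<le> J0 y}"
    using assms T_right J0_eq_j_pos[OF gamma_pos] J0_ge_J0_gamma by simp
  then show ?thesis
    using argmin_J0 True by simp
next
  case False
  have "G z = ereal (T z)"
    using biconj_le[of J0 z] tangent_le_G[of z] assms by (intro antisym) auto
  then show ?thesis
    using tangent_contact_left False by simp
qed

text \<open>In the notation of the theorem, \<open>F z \<ge> \<eta>\<close> holds once \<open>near_tangent \<eta> z a\<close> fails for every
  admissible \<open>a\<close>.\<close>

definition near_tangent :: "real \<Rightarrow> real \<Rightarrow> real \<Rightarrow> bool" where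
  "near_tangent e z a \<longleftrightarrow> (J1 a + J1 (2 * z - a)) / 2 + J2 z \<le> ereal (T z + e)"

lemma near_tangent_real:
  "near_tangent e z a \<longleftrightarrow> J1 a \<noteq> \<infinity> \<and> J1 (2 * z - a) \<noteq> \<infinity> \<and> J2 z \<noteq> \<infinity> \<and>
     (j1 a + j1 (2 * z - a)) / 2 + j2 z \<le> T z + e"
  unfolding near_tangent_def j1_def j2_def
  using J1_ninf[of a] J1_ninf[of "2 * z - a"] J2_ninf[of z]
  by (cases "J1 a"; cases "J1 (2 * z - a)"; cases "J2 z") auto

lemma near_tangent_mono: "near_tangent e z a \<Longrightarrow> e \<le> e' \<Longrightarrow> near_tangent e' z a"
  unfolding near_tangent_def by (erule order.trans) simp

lemma near_tangent_zero_imp: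
  assumes "near_tangent 0 z a"
  shows "a = min ell \<gamma>"
proof -
  let ?S = "J2 z + (J1 a + J1 (2 * z - a)) / 2"
  have "J0 z \<le> ?S"
    by (rule J0_le_split)
  moreover have "?S \<le> ereal (T z)"
    using assms unfolding near_tangent_def by (simp add: add.commute)
  moreover note tangent_le_G[of z] biconj_le[of J0 z]
  ultimately have split: "J0 z = ?S" and touch: "J0 z = ereal (T z)" and "J0 z = G z"
    by (meson antisym order.trans)+
  moreover have "z \<in> edom J0"
    using touch unfolding edom_def by simp
  ultimately obtain P where P: "\<And>p. fst p + snd p = 2 * z \<and>
      J0 z = J2 z + (J1 (fst p) + J1 (snd p)) / 2 \<Longrightarrow> p = P"
    using LJ2 by metis
  have "(a, 2 * z - a) = P" "(2 * z - a, a) = P"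
    using split by (auto intro!: P simp: add.commute)
  then have "a = 2 * z - a"
    by (metis prod.inject)
  then have "a = z"
    by simp
  then show ?thesis
    using J0_eq_tangent_imp[OF touch] by simp
qed

lemma near_tangent_lower_bound: "\<exists>L. \<forall>z a. near_tangent 1 z a \<longrightarrow> -L \<le> a \<and> -L \<le> 2 * z - a"
proof -
  obtain W where W: "\<And>w. w \<le> W \<Longrightarrow> J1 w \<noteq> \<infinity> \<Longrightarrow> 2 * (\<bar>D\<bar> + 1) * \<bar>w\<bar> - c1 \<le> j1 w"
    using j1_superlinear by blast
  define L where "L = max (max (-W) 0) (g ell + \<bar>D\<bar> * ell + 2 * c1 + 1)"
  have lower: "-L \<le> w"
    if "w \<le> z" "J1 w \<noteq> \<infinity>" "(j1 w + j1 w') / 2 + j2 z \<le> T z + 1" for z w w'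
  proof (rule ccontr)
    assume "\<not> -L \<le> w"
    then have w: "w \<le> W" "w < 0" "g ell + \<bar>D\<bar> * ell + 2 * c1 + 1 < \<bar>w\<bar>"
      unfolding L_def by auto
    have "D * (z - ell) \<le> D * (w - ell)"
      using D_nonpos \<open>w \<le> z\<close> by (intro mult_left_mono_neg) auto
    moreover have "D * (w - ell) = \<bar>D\<bar> * \<bar>w\<bar> + \<bar>D\<bar> * ell"
      using D_nonpos w(2) ell_pos by (simp add: algebra_simps abs_if)
    moreover have "2 * (\<bar>D\<bar> + 1) * \<bar>w\<bar> - c1 \<le> j1 w"
      using W w(1) \<open>J1 w \<noteq> \<infinity>\<close> by blast
    moreover have "2 * (\<bar>D\<bar> + 1) * \<bar>w\<bar> = 2 * (\<bar>D\<bar> * \<bar>w\<bar>) + 2 * \<bar>w\<bar>"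
      by (simp add: algebra_simps)
    moreover have "j1 w + j1 w' + 2 * j2 z \<le> 2 * (g ell + D * (z - ell)) + 2"
      using that(3) unfolding T_def by (simp add: field_simps)
    ultimately show False
      using j1_ge[of w'] j2_ge[of z] w(3) by argo
  qed
  have "-L \<le> a \<and> -L \<le> 2 * z - a" if "near_tangent 1 z a" for z a
  proof (cases "a \<le> z")
    case True
    then show ?thesis
      using lower[of a z "2 * z - a"] that unfolding near_tangent_real by auto
  next
    case False
    then show ?thesis
      using lower[of "2 * z - a" z a] that unfolding near_tangent_real by (auto simp: add.commute)
  qed
  then show ?thesis
    by blast
qed

lemma near_tangent_bounded: "\<exists>e>0. \<exists>B. \<forall>z a. near_tangent e z a \<longrightarrow> \<bar>z\<bar> \<le> B \<and> \<bar>a\<bar> \<le> B"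
proof -
  obtain \<kappa> Z where \<kappa>: "0 < \<kappa>" "\<And>z. Z \<le> z \<Longrightarrow> ereal (T z + \<kappa>) \<le> J0 z"
    using J0_above_tangent_eventually by blast
  obtain L where L: "\<And>z a. near_tangent 1 z a \<Longrightarrow> -L \<le> a \<and> -L \<le> 2 * z - a"
    using near_tangent_lower_bound by blast
  define e where "e = min (\<kappa> / 2) 1"
  have "\<bar>z\<bar> \<le> 2 * \<bar>Z\<bar> + 2 * \<bar>L\<bar> \<and> \<bar>a\<bar> \<le> 2 * \<bar>Z\<bar> + 2 * \<bar>L\<bar>" if "near_tangent e z a" for z a
  proof -
    have "-L \<le> a" "-L \<le> 2 * z - a"
      using L near_tangent_mono[OF that, of 1] by (auto simp: e_def)
    moreover have "z < Z"
    proof (rule ccontr)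
      assume "\<not> z < Z"
      then have "ereal (T z + \<kappa>) \<le> J0 z"
        using \<kappa>(2) by simp
      also have "\<dots> \<le> J2 z + (J1 a + J1 (2 * z - a)) / 2"
        by (rule J0_le_split)
      also have "\<dots> \<le> ereal (T z + e)"
        using that unfolding near_tangent_def by (simp add: add.commute)
      finally show False
        using \<kappa>(1) by (simp add: e_def)
    qed
    ultimately show ?thesis
      by (simp add: abs_le_iff) linarith
  qed
  moreover have "0 < e"
    using \<kappa>(1) by (simp add: e_def)
  ultimately show ?thesis
    by blast
qed

lemma near_tangent_limit:
  assumes z: "z \<longlonglongrightarrow> z0" and a: "a \<longlonglongrightarrow> a0" and e: "e \<longlonglongrightarrow> 0"
      and near: "\<And>n. near_tangent (e n) (z n) (a n)"
  shows "near_tangent 0 z0 a0"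
proof -
  define b where "b n = 2 * z n - a n" for n
  have b: "b \<longlonglongrightarrow> 2 * z0 - a0"
    unfolding b_def by (intro tendsto_intros z a)
  have fin: "J1 (a n) \<noteq> \<infinity>" "J1 (b n) \<noteq> \<infinity>" "J2 (z n) \<noteq> \<infinity>"
    and le: "(j1 (a n) + j1 (b n)) / 2 + j2 (z n) \<le> T (z n) + e n" for n
    using near[of n] unfolding near_tangent_real b_def by auto
  have T_lim: "(\<lambda>n. T (z n) + e n) \<longlonglongrightarrow> T z0 + 0"
    unfolding T_def by (intro tendsto_intros z e)
  obtain C where C: "\<And>n. T (z n) + e n \<le> C"
    using convergent_imp_Bseq[OF convergentI[OF T_lim]] by (auto simp: Bseq_def abs_le_iff)
  define M where "M = 2 * C + 3 * c1"
  have le2: "j1 (a n) + j1 (b n) + 2 * j2 (z n) \<le> 2 * (T (z n) + e n)" for n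
    using le[of n] by (simp add: field_simps)
  have "j1 (a n) \<le> M" "j1 (b n) \<le> M" "j2 (z n) \<le> M" for n
    using le2[of n] C[of n] j1_ge[of "a n"] j1_ge[of "b n"] j2_ge[of "z n"]
    by (auto simp: M_def)
  then have J_le: "J1 (a n) \<le> ereal M" "J1 (b n) \<le> ereal M" "J2 (z n) \<le> ereal M" for n
    using J1_eq_j1[OF fin(1)] J1_eq_j1[OF fin(2)] J2_eq_j2[OF fin(3)] by simp_all
  have dom: "a0 \<in> edom J1" "2 * z0 - a0 \<in> edom J1" "z0 \<in> edom J2"
    using limit_in_edom[OF a, of M] limit_in_edom[OF b, of M] limit_in_edom[OF z, of M]
      J_le dom_eq by blast+
  have "(\<lambda>n. (j1 (a n) + j1 (b n)) / 2 + j2 (z n))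
      \<longlonglongrightarrow> (j1 a0 + j1 (2 * z0 - a0)) / 2 + j2 z0"
    unfolding j1_def j2_def
    by (intro tendsto_intros C1alpha_on_dom_LIMSEQ[OF J1_C1a] C1alpha_on_dom_LIMSEQ[OF J2_C1a]
        a b z dom) (use fin in \<open>auto simp: edom_def\<close>)
  then have "(j1 a0 + j1 (2 * z0 - a0)) / 2 + j2 z0 \<le> T z0 + 0"
    using T_lim le by (intro LIMSEQ_le) auto
  then show ?thesis
    unfolding near_tangent_real using dom dom_eq by (auto simp: edom_def)
qed

lemma uniform_gap:
  assumes "0 < \<epsilon>"
  shows "\<exists>\<eta>>0. \<forall>z a. \<epsilon> \<le> \<bar>a - min ell \<gamma>\<bar> \<longrightarrow> \<not> near_tangent \<eta> z a"
proof (rule ccontr)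
  assume contra: "\<not> ?thesis"
  obtain e0 B where e0: "0 < e0" and B: "\<And>z a. near_tangent e0 z a \<Longrightarrow> \<bar>z\<bar> \<le> B \<and> \<bar>a\<bar> \<le> B"
    using near_tangent_bounded by blast
  define e where "e n = min e0 (inverse (real (Suc n)))" for n
  have "\<exists>p. \<epsilon> \<le> \<bar>snd p - min ell \<gamma>\<bar> \<and> near_tangent (e n) (fst p) (snd p)" for n
    using contra e0 by (auto simp: e_def)
  then obtain P where P: "\<And>n. \<epsilon> \<le> \<bar>snd (P n) - min ell \<gamma>\<bar>"
      "\<And>n. near_tangent (e n) (fst (P n)) (snd (P n))"
    by metis
  have "P n \<in> {-B..B} \<times> {-B..B}" for n
    using B[OF near_tangent_mono[OF P(2)[of n]]] by (auto simp: e_def abs_le_iff mem_Times_iff)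
  moreover have "compact ({-B..B} \<times> {-B..B} :: (real \<times> real) set)"
    by (intro compact_Times compact_Icc)
  ultimately obtain l r where r: "strict_mono r" and lim: "(P \<circ> r) \<longlonglongrightarrow> l"
    by (metis compact_imp_seq_compact seq_compactE)
  have "e \<longlonglongrightarrow> min e0 0"
    unfolding e_def by (intro tendsto_intros LIMSEQ_inverse_real_of_nat)
  then have "(e \<circ> r) \<longlonglongrightarrow> 0"
    using e0 LIMSEQ_subseq_LIMSEQ[OF _ r] by simp
  then have "near_tangent 0 (fst l) (snd l)"
    using P(2) tendsto_fst[OF lim] tendsto_snd[OF lim]
    by (intro near_tangent_limit[of "fst \<circ> P \<circ> r" _ "snd \<circ> P \<circ> r" _ "e \<circ> r"])
       (auto simp: comp_def)
  then have "snd l = min ell \<gamma>"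
    by (rule near_tangent_zero_imp)
  moreover have "(\<lambda>n. \<bar>snd (P (r n)) - min ell \<gamma>\<bar>) \<longlonglongrightarrow> \<bar>snd l - min ell \<gamma>\<bar>"
    using lim unfolding comp_def by (intro tendsto_intros)
  then have "\<epsilon> \<le> \<bar>snd l - min ell \<gamma>\<bar>"
    using P(1) by (intro LIMSEQ_le_const) auto
  ultimately show False
    using assms by simp
qed

lemma gap_le_Inf:
  assumes "\<forall>a. \<epsilon> \<le> \<bar>a - min ell \<gamma>\<bar> \<longrightarrow> \<not> near_tangent \<eta> z a"
  shows "ereal \<eta> \<le> Inf ((\<lambda>a. (J1 a + J1 (2 * z - a)) / 2) ` {a. \<bar>a - min ell \<gamma>\<bar> \<ge> \<epsilon>})
           + J2 z - ereal (D * (z - ell)) - G ell"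
proof -
  define X where "X = Inf ((\<lambda>a. (J1 a + J1 (2 * z - a)) / 2) ` {a. \<bar>a - min ell \<gamma>\<bar> \<ge> \<epsilon>})"
  have "ereal (-c1) \<le> X"
    unfolding X_def
  proof (rule Inf_greatest, clarify)
    fix a
    show "ereal (-c1) \<le> (J1 a + J1 (2 * z - a)) / 2"
      using add_mono[OF J1_ge[of a] J1_ge[of "2 * z - a"]]
      by (cases "J1 a + J1 (2 * z - a)") auto
  qed
  have "ereal (T z + \<eta>) \<le> X + J2 z"
  proof (cases "J2 z")
    case (real s)
    have "ereal (T z + \<eta> - s) \<le> X"
      unfolding X_def
    proof (rule Inf_greatest, clarify)
      fix a assume "\<epsilon> \<le> \<bar>a - min ell \<gamma>\<bar>"
      then have "ereal (T z + \<eta>) \<le> (J1 a + J1 (2 * z - a)) / 2 + ereal s"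
        using assms real unfolding near_tangent_def by auto
      then show "ereal (T z + \<eta> - s) \<le> (J1 a + J1 (2 * z - a)) / 2"
        by (cases "(J1 a + J1 (2 * z - a)) / 2") auto
    qed
    then show ?thesis
      using real by (cases X) auto
  qed (use \<open>ereal (-c1) \<le> X\<close> J2_ninf[of z] in auto)
  then show ?thesis
    unfolding X_def[symmetric] G_ell T_def by (cases "X + J2 z") auto
qed

end

theorem lemma4p1:
  fixes J1 J2 \<Psi> :: "real \<Rightarrow> ereal"
    and \<alpha> c1 c2 \<delta>1 \<delta>2 \<gamma> J0inf ell :: real
  assumes J1_ninf: "\<And>z. J1 z \<noteq> -\<infinity>"
      and J2_ninf: "\<And>z. J2 z \<noteq> -\<infinity>"
      \<comment> \<open>[LJ1]\<close>
      and LJ1: "{z. J0fun J1 J2 z = biconj (J0fun J1 J2) z}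
                  \<inter> {z. locally_affine_at (J0fun J1 J2) z} = {}"
      \<comment> \<open>[LJ2]\<close>
      and LJ2: "\<And>z. z \<in> edom (J0fun J1 J2) \<Longrightarrow> J0fun J1 J2 z = biconj (J0fun J1 J2) z \<Longrightarrow>
                  (\<exists>!p. fst p + snd p = 2 * z \<and>
                        J0fun J1 J2 z = J2 z + (J1 (fst p) + J1 (snd p)) / 2)"
      \<comment> \<open>[LJ3]\<close>
      and alpha: "0 < \<alpha>" "\<alpha> \<le> 1"
      and J1_C1a: "C1alpha_on_dom \<alpha> J1"
      and J2_C1a: "C1alpha_on_dom \<alpha> J2"
      and J0_C1: "C1_on_dom (J0fun J1 J2)"
      and dom_eq: "edom J1 = edom J2"
      and dom_pos: "{0<..} \<subseteq> edom J1"
      and J1_lim: "(J1 \<longlongrightarrow> 0) at_top"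
      and J2_lim: "(J2 \<longlongrightarrow> 0) at_top"
      and J0_lim: "(J0fun J1 J2 \<longlongrightarrow> ereal J0inf) at_top"
      \<comment> \<open>[LJ4]\<close>
      and Psi_nonneg: "\<And>z. \<Psi> z \<ge> 0"
      and Psi_convex: "econvex_on UNIV \<Psi>"
      and Psi_superlin: "((\<lambda>z. \<Psi> z / ereal \<bar>z\<bar>) \<longlongrightarrow> \<infinity>) at_bot"
      and c_pos: "c1 > 0" "c2 > 0"
      and J1_bounds: "\<And>z. ereal c1 * (\<Psi> z - 1) \<le> J1 z"
                     "\<And>z. J1 z \<le> ereal c2 * max (\<Psi> z) (ereal \<bar>z\<bar>)"
      and J2_bounds: "\<And>z. ereal c1 * (\<Psi> z - 1) \<le> J2 z"
                     "\<And>z. J2 z \<le> ereal c2 * max (\<Psi> z) (ereal \<bar>z\<bar>)"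
      and deltas_pos: "\<delta>1 > 0" "\<delta>2 > 0" and gamma_pos: "\<gamma> > 0"
      and argmin_J1: "{x. \<forall>z. J1 x \<le> J1 z} = {\<delta>1}"
      and argmin_J2: "{x. \<forall>z. J2 x \<le> J2 z} = {\<delta>2}"
      and argmin_J0: "{x. \<forall>z. J0fun J1 J2 x \<le> J0fun J1 J2 z} = {\<gamma>}"
      and J1_sconv: "estrict_convex_on ({..<\<delta>1} \<inter> edom J1) J1"
      and J2_sconv: "estrict_convex_on ({..<\<delta>2} \<inter> edom J2) J2"
      and J0_gamma: "J0fun J1 J2 \<gamma> < ereal J0inf"
      and J0_convex_left: "\<And>z. z \<le> \<gamma> \<Longrightarrow> J0fun J1 J2 z = biconj (J0fun J1 J2) z"
      \<comment> \<open>the lemma\<close>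
      and ell_pos: "ell > 0"
  shows "\<exists>D. ((\<lambda>z. real_of_ereal (biconj (J0fun J1 J2) z)) has_real_derivative D) (at ell) \<and>
           (\<forall>\<epsilon>>0. \<exists>\<eta>>0. \<forall>z::real.
              Inf ((\<lambda>a. (J1 a + J1 (2 * z - a)) / 2) ` {a. \<bar>a - min ell \<gamma>\<bar> \<ge> \<epsilon>})
                + J2 z - ereal (D * (z - ell)) - biconj (J0fun J1 J2) ell \<ge> ereal \<eta>)"
proof -
  interpret lj_potentials J1 J2 \<Psi> \<alpha> c1 c2 \<gamma> J0inf
    by unfold_locales (fact J1_ninf J2_ninf LJ1 LJ2 J1_C1a J2_C1a J0_C1 dom_eq dom_pos J0_lim
        Psi_nonneg Psi_superlin c_pos J1_bounds J2_bounds gamma_pos argmin_J0 J0_gamma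
        J0_convex_left)+
  obtain D where D: "(g has_real_derivative D) (at ell)" "\<gamma> \<le> ell \<longrightarrow> D = 0"
    using g_has_derivative[OF ell_pos] by blast
  interpret lj_tangent J1 J2 \<Psi> \<alpha> c1 c2 \<gamma> J0inf ell D
    using ell_pos D by unfold_locales auto
  show ?thesis
    using D(1) uniform_gap gap_le_Inf unfolding g_def[abs_def] by meson
qed

end
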